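(* Let $h>0$ and $n\ge1$. For $(\theta_1,\dots,\theta_n)$ with $1>\theta_1>\theta_2>\cdots>\theta_n>0$ let $\Theta\in\mathbb{R}^{n\times n}$ be the matrix with entries $\Theta_{ii}=\frac{1}{4h}\cot(\pi\theta_i)$ and, for $i\neq j$, $\Theta_{ij}=\frac{1}{4h}\left(\cot\left(\pi\frac{\theta_i+\theta_j}{2}\right)-\cot\left(\pi\frac{\theta_i-\theta_j}{2}\right)\right)$. Then there exists $(\theta_1,\dots,\theta_n)\in(0,1)^n$ with $1>\theta_1>\theta_2>\cdots>\theta_n>0$ for which $\Theta$ is singular. *)

theory Defs
  imports "HOL-Analysis.Analysis" "Jordan_Normal_Form.Determinant"
begin

text \<open>The matrix Theta (indices 0..n-1 correspond to 1..n in the paper).\<close>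
definition Theta_mat :: "real \<Rightarrow> nat \<Rightarrow> (nat \<Rightarrow> real) \<Rightarrow> real mat" where
  "Theta_mat h n \<theta> = mat n n (\<lambda>(i, j).
     if i = j then (1 / (4 * h)) * cot (pi * \<theta> i)
     else (1 / (4 * h)) * (cot (pi * (\<theta> i + \<theta> j) / 2) - cot (pi * (\<theta> i - \<theta> j) / 2)))"

end

theory Submission imports Defs begin

text \<open>
  Take the equally spaced angles \<open>\<theta>\<^sub>i = (2n - 2i + 1)/(2n)\<close>, \<open>i = 1, \<dots>, n\<close>. Then every entry of \<open>\<Theta>\<close>
  has the form \<open>(c(2n + 1 - i - j) - c(j - i))/(4h)\<close> with \<open>c k = cot (k\<pi>/(2n))\<close>, also on the
  diagonal since \<open>c 0 = 0\<close>. The function \<open>c\<close> is odd and \<open>2n\<close>-periodic, so its sum over any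
  \<open>2n\<close> consecutive integers vanishes; splitting such a window in two halves shows that every
  column of \<open>\<Theta>\<close> sums to zero. Hence the all-ones vector lies in the kernel of \<open>\<Theta>\<^sup>T\<close>.
\<close>

lemma sum_period_shift_invariant:
  fixes f :: "int \<Rightarrow> 'a::ab_group_add"
  assumes periodic: "\<And>k. f (k + int p) = f k"
  shows "(\<Sum>i<p. f (a + int i)) = (\<Sum>i<p. f (b + int i))"
proof -
  have step: "(\<Sum>i<p. f (c + 1 + int i)) = (\<Sum>i<p. f (c + int i))" for c
  proof -
    have "(\<Sum>i<p. f (c + 1 + int i)) - (\<Sum>i<p. f (c + int i))
          = (\<Sum>i<p. f (c + int (Suc i)) - f (c + int i))"
      by (simp add: sum_subtractf add_ac)
    also have "\<dots> = f (c + int p) - f c"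
      using sum_lessThan_telescope[of "\<lambda>m. f (c + int m)" p] by simp
    finally show ?thesis
      using periodic[of c] by simp
  qed
  have "(\<Sum>i<p. f (c + int i)) = (\<Sum>i<p. f (int i))" for c
  proof (induction c rule: int_induct[where k = 0])
    case (step1 c)
    then show ?case using step[of c] by simp
  next
    case (step2 c)
    then show ?case using step[of "c - 1"] by simp
  qed simp
  then show ?thesis by metis
qed

lemma sum_period_odd_periodic_eq_0:
  fixes f :: "int \<Rightarrow> 'a::real_vector"
  assumes periodic: "\<And>k. f (k + int p) = f k"
    and odd: "\<And>k. f (- k) = - f k"
  shows "(\<Sum>i<p. f (a + int i)) = 0"
proof -
  have "(\<Sum>i<p. f (a + int i)) = (\<Sum>i<p. f (a + int (p - Suc i)))"
    by (rule sum.nat_diff_reindex[symmetric])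
  also have "\<dots> = (\<Sum>i<p. - f (1 - a + int i))"
  proof (rule sum.cong[OF refl])
    fix i assume "i \<in> {..<p}"
    then have "a + int (p - Suc i) = - (1 - a - int p + int i)"
      by simp
    then have "f (a + int (p - Suc i)) = - f (1 - a - int p + int i)"
      using odd by metis
    also have "\<dots> = - f (1 - a + int i)"
      using periodic[of "1 - a - int p + int i"] by (simp add: algebra_simps)
    finally show "f (a + int (p - Suc i)) = - f (1 - a + int i)" .
  qed
  also have "\<dots> = - (\<Sum>i<p. f (a + int i))"
    using sum_period_shift_invariant[of f p "1 - a" a, OF periodic] by (simp add: sum_negf)
  finally have "(2::real) *\<^sub>R (\<Sum>i<p. f (a + int i)) = 0"
    by (simp add: scaleR_2 eq_neg_iff_add_eq_0)
  then show ?thesis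
    by simp
qed

text \<open>Splitting the window \<open>j - n + 1, \<dots>, j + n\<close> of length \<open>2n\<close> at \<open>j\<close>.\<close>

lemma sum_half_period_odd_periodic_reflect:
  fixes f :: "int \<Rightarrow> 'a::real_vector"
  assumes periodic: "\<And>k. f (k + 2 * int n) = f k"
    and odd: "\<And>k. f (- k) = - f k"
  shows "(\<Sum>i<n. f (2 * int n - 1 - j - int i)) = (\<Sum>i<n. f (j - int i))"
proof -
  let ?g = "\<lambda>i. f (j - int n + 1 + int i)"
  have "0 = (\<Sum>i<2 * n. ?g i)"
    using sum_period_odd_periodic_eq_0[of f "2 * n"] periodic odd by simp
  also have "\<dots> = (\<Sum>i<n. ?g i) + (\<Sum>i<n. ?g (i + n))"
    using sum.atLeastLessThan_concat[of 0 n "n + n" ?g] sum.shift_bounds_nat_ivl[of ?g 0 n n]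
    by (simp add: lessThan_atLeast0 mult_2)
  also have "(\<Sum>i<n. ?g i) = (\<Sum>i<n. ?g (n - Suc i))"
    by (rule sum.nat_diff_reindex[symmetric])
  also have "\<dots> = (\<Sum>i<n. f (j - int i))"
    by (intro sum.cong) auto
  also have "(\<Sum>i<n. ?g (i + n)) = (\<Sum>i<n. - f (2 * int n - 1 - j - int i))"
  proof (rule sum.cong[OF refl])
    fix i
    have eq: "j - int n + 1 + int (i + n) = - (2 * int n - 1 - j - int i) + 2 * int n"
      by simp
    show "?g (i + n) = - f (2 * int n - 1 - j - int i)"
      by (simp only: eq periodic odd)
  qed
  finally show ?thesis
    by (simp add: sum_negf)
qed

lemma cot_int_multiple_periodic:
  "cot (of_int (k + 2 * int n) * pi / (2 * real n)) = cot (of_int k * pi / (2 * real n))"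
proof (cases "n = 0")
  case False
  then have "of_int (k + 2 * int n) * pi / (2 * real n) = of_int k * pi / (2 * real n) + pi"
    by (simp add: field_simps)
  then show ?thesis
    by (simp add: cot_def)
qed simp

lemma sum_cot_half_period_reflect:
  "(\<Sum>i<n. cot (of_int (2 * int n - 1 - j - int i) * pi / (2 * real n)))
     = (\<Sum>i<n. cot (of_int (j - int i) * pi / (2 * real n)))"
  by (rule sum_half_period_odd_periodic_reflect)
     (rule cot_int_multiple_periodic, simp add: cot_def)

definition equispaced_angles :: "nat \<Rightarrow> nat \<Rightarrow> real" where
  "equispaced_angles n i = of_int (2 * int n - 2 * int i - 1) / (2 * real n)"

lemma equispaced_angles_bounds:
  assumes "i < n"
  shows "0 < equispaced_angles n i" "equispaced_angles n i < 1"
  using assms by (simp_all add: equispaced_angles_def field_simps)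

lemma equispaced_angles_strict_antimono:
  assumes "i < j" "j < n"
  shows "equispaced_angles n j < equispaced_angles n i"
  using assms by (simp add: equispaced_angles_def divide_strict_right_mono)

text \<open>On the diagonal the second cotangent is \<open>cot 0\<close>, which is \<open>0\<close> in HOL (\<open>cos 0 / sin 0\<close> with \<open>x / 0 = 0\<close>).\<close>

lemma Theta_mat_equispaced_angles_entry:
  assumes "i < n" "j < n"
  shows "Theta_mat h n (equispaced_angles n) $$ (i, j) =
    1 / (4 * h) * (cot (of_int (2 * int n - 1 - int j - int i) * pi / (2 * real n))
                   - cot (of_int (int j - int i) * pi / (2 * real n)))"
proof -
  have entry: "Theta_mat h n (equispaced_angles n) $$ (i, j) =
    (if i = j then 1 / (4 * h) * cot (pi * equispaced_angles n i)
     else 1 / (4 * h) * (cot (pi * (equispaced_angles n i + equispaced_angles n j) / 2)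
                         - cot (pi * (equispaced_angles n i - equispaced_angles n j) / 2)))"
    using assms by (simp add: Theta_mat_def)
  have sum_arg: "pi * (equispaced_angles n i + equispaced_angles n j) / 2
          = of_int (2 * int n - 1 - int j - int i) * pi / (2 * real n)"
   and diff_arg: "pi * (equispaced_angles n i - equispaced_angles n j) / 2
          = of_int (int j - int i) * pi / (2 * real n)"
   and diag_arg: "pi * equispaced_angles n i = of_int (2 * int n - 1 - int i - int i) * pi / (2 * real n)"
    using assms by (simp_all add: equispaced_angles_def field_simps)
  show ?thesis
  proof (cases "i = j")
    case True
    show ?thesis
      unfolding entry if_P[OF True] diag_arg using True by simp
  next
    case False
    show ?thesis
      unfolding entry if_not_P[OF False] sum_arg diff_arg ..
  qed
qed

lemma Theta_mat_equispaced_angles_column_sum: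
  assumes "j < n"
  shows "(\<Sum>i<n. Theta_mat h n (equispaced_angles n) $$ (i, j)) = 0"
proof -
  have "(\<Sum>i<n. Theta_mat h n (equispaced_angles n) $$ (i, j)) =
    (\<Sum>i<n. 1 / (4 * h) * (cot (of_int (2 * int n - 1 - int j - int i) * pi / (2 * real n))
                            - cot (of_int (int j - int i) * pi / (2 * real n))))"
    using assms by (intro sum.cong) (simp_all add: Theta_mat_equispaced_angles_entry)
  also have "\<dots> = 1 / (4 * h) *
    ((\<Sum>i<n. cot (of_int (2 * int n - 1 - int j - int i) * pi / (2 * real n)))
     - (\<Sum>i<n. cot (of_int (int j - int i) * pi / (2 * real n))))"
    by (simp only: sum_subtractf flip: sum_distrib_left)
  finally show ?thesis
    by (simp only: sum_cot_half_period_reflect) simp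
qed

lemma det_eq_0_if_column_sums_eq_0:
  fixes A :: "'a::idom mat"
  assumes A: "A \<in> carrier_mat n n" and "n \<ge> 1"
    and column_sums: "\<And>j. j < n \<Longrightarrow> (\<Sum>i<n. A $$ (i, j)) = 0"
  shows "det A = 0"
proof -
  let ?ones = "vec n (\<lambda>_. 1) :: 'a vec"
  have "transpose_mat A *\<^sub>v ?ones = 0\<^sub>v n"
    using A column_sums by (intro eq_vecI) (auto simp: scalar_prod_def lessThan_atLeast0)
  moreover have "?ones \<noteq> 0\<^sub>v n"
    using \<open>n \<ge> 1\<close> by (metis index_vec index_zero_vec(1) less_one one_neq_zero order_less_le_trans)
  ultimately have "\<exists>v. v \<in> carrier_vec n \<and> v \<noteq> 0\<^sub>v n \<and> transpose_mat A *\<^sub>v v = 0\<^sub>v n"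
    by (intro exI[of _ ?ones]) simp
  then have "det (transpose_mat A) = 0"
    using det_0_iff_vec_prod_zero[of "transpose_mat A" n] A by simp
  then show ?thesis
    by (simp add: det_transpose[OF A])
qed

theorem proposition5p4:
  fixes h :: real and n :: nat
  assumes "h > 0" and "n \<ge> 1"
  shows "\<exists>\<theta> :: nat \<Rightarrow> real.
           (\<forall>i<n. 0 < \<theta> i \<and> \<theta> i < 1) \<and>
           (\<forall>i j. i < j \<and> j < n \<longrightarrow> \<theta> j < \<theta> i) \<and>
           det (Theta_mat h n \<theta>) = 0"
proof (intro exI conjI)
  show "\<forall>i<n. 0 < equispaced_angles n i \<and> equispaced_angles n i < 1"
    using equispaced_angles_bounds by blast
  show "\<forall>i j. i < j \<and> j < n \<longrightarrow> equispaced_angles n j < equispaced_angles n i"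
    using equispaced_angles_strict_antimono by blast
  show "det (Theta_mat h n (equispaced_angles n)) = 0"
    using Theta_mat_equispaced_angles_column_sum \<open>n \<ge> 1\<close>
    by (intro det_eq_0_if_column_sums_eq_0[where n = n]) (auto simp: Theta_mat_def)
qed

end
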